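(* Let $p$ be a prime number and let $d$ be a positive integer dividing $p^n+1$ for some positive integer $n$. Then: (i) there is a positive integer $k$ such that $v_2(\ell_p(r))=k$ for every odd prime factor $r$ of $d$; (ii) if $p>2$ and $k=1$, then $v_2(d)\le v_2(p+1)$, while if $p>2$ and $k>1$, then $v_2(d)\le 1$.
   Context: For coprime integers $a,b$ with $b>0$, $\ell_a(b)$ denotes the multiplicative order of $a$ modulo $b$. For a prime $l$ and positive integer $n$, $v_l(n)$ denotes the exponent of $l$ in the prime factorization of $n$. *)

theory Defs
  imports "HOL-Number_Theory.Number_Theory"
begin

end

theory Submission
  imports Defs
begin

text \<open>
  If an odd prime \<open>r\<close> divides \<open>p\<^sup>n + 1\<close>, then \<open>p\<^sup>n \<equiv> -1\<close> and \<open>p\<^bsup>2n\<^esub> \<equiv> 1 (mod r)\<close>, so the order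
  of \<open>p\<close> modulo \<open>r\<close> divides \<open>2n\<close> but not \<open>n\<close>; its 2-adic valuation is therefore \<open>v\<^sub>2(n) + 1\<close>,
  whatever \<open>r\<close> is. For odd \<open>p\<close>, \<open>v\<^sub>2(d) \<le> v\<^sub>2(p\<^sup>n + 1)\<close>: for odd \<open>n\<close> the cofactor
  \<open>1 - p + p\<^sup>2 - \<dots> + p\<^bsup>n-1\<^esub>\<close> of \<open>p + 1\<close> is odd, and for even \<open>n\<close> the odd square \<open>p\<^sup>n\<close>
  is \<open>1 (mod 8)\<close>.
\<close>

lemma power_plus_one_eq_times_odd:
  fixes p :: "'a :: ring_parity"
  assumes "odd p" "odd n"
  shows "\<exists>q. p ^ n + 1 = (p + 1) * q \<and> odd q"
  using assms(2)
proof (induction n rule: nat_less_induct)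
  case (1 n)
  show ?case
  proof (cases "n = 1")
    case True
    then show ?thesis by (intro exI[of _ 1]) auto
  next
    case False
    define m where "m = n - 2"
    have m: "n = m + 2" "odd m"
      using "1.prems" False unfolding m_def by presburger+
    then obtain q where q: "p ^ m + 1 = (p + 1) * q" "odd q"
      using "1.IH" by (metis less_add_same_cancel1 zero_less_numeral)
    have "p ^ n + 1 = p\<^sup>2 * (p ^ m + 1) - (p - 1) * (p + 1)"
      by (simp add: m power_add algebra_simps power2_eq_square)
    also have "\<dots> = (p + 1) * (p\<^sup>2 * q - p + 1)"
      unfolding q(1) by (simp add: algebra_simps power2_eq_square)
    finally show ?thesis
      using q(2) assms(1) by (intro exI[of _ "p\<^sup>2 * q - p + 1"]) simp
  qed
qed

lemma multiplicity_two_power_plus_one_odd: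
  fixes p n :: nat
  assumes "odd p" "odd n"
  shows "multiplicity 2 (p ^ n + 1) = multiplicity 2 (p + 1)"
proof -
  obtain q' :: int where q': "int p ^ n + 1 = (int p + 1) * q'" "odd q'"
    using power_plus_one_eq_times_odd[of "int p" n] assms by auto
  have "q' > 0"
    using q'(1) by (smt (verit) mult_nonneg_nonpos zero_le_power of_nat_0_le_iff)
  define q where "q = nat q'"
  have "int (p ^ n + 1) = int ((p + 1) * q)"
    using q'(1) \<open>q' > 0\<close> unfolding q_def by (simp add: algebra_simps)
  then have q: "p ^ n + 1 = (p + 1) * q" by (rule of_nat_eq_iff[THEN iffD1])
  have "odd q"
    using q'(2) \<open>q' > 0\<close> unfolding q_def by (simp add: even_nat_iff)
  then have "multiplicity 2 ((p + 1) * q) = multiplicity 2 (p + 1) + multiplicity 2 q"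
    by (intro prime_elem_multiplicity_mult_distrib) (auto simp: odd_pos)
  with q \<open>odd q\<close> show ?thesis by (simp add: not_dvd_imp_multiplicity_0)
qed

lemma multiplicity_two_power_plus_one_even:
  fixes p n :: nat
  assumes "odd p" "even n"
  shows "multiplicity 2 (p ^ n + 1) \<le> 1"
proof -
  obtain m where "n = 2 * m" using assms(2) by blast
  then have "[p ^ n = 1] (mod 8)"
    using assms(1) square_mod_8_eq_1_iff[of "p ^ m"] by (simp add: power_mult_distrib power_mult mult.commute)
  then have "(p ^ n + 1) mod 8 = 2"
    by (simp add: cong_def mod_Suc)
  then have "\<not> 4 dvd p ^ n + 1" by presburger
  then show ?thesis
    using power_dvd_iff_le_multiplicity[where p = "2 :: nat" and n = 2 and x = "p ^ n + 1"] by simp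
qed

lemma multiplicity_two_of_dvd_double:
  fixes m n :: nat
  assumes "m dvd 2 * n" "\<not> m dvd n" "n > 0"
  shows "multiplicity 2 m = multiplicity 2 n + 1"
proof -
  obtain t where t: "2 * n = m * t" using assms(1) by blast
  with assms(3) have "m * t > 0" by linarith
  then have "m \<noteq> 0" "t \<noteq> 0" by auto
  have "odd t"
  proof
    assume "even t"
    then obtain s where "t = 2 * s" by blast
    with t have "n = m * s" by simp
    with assms(2) show False by simp
  qed
  have "multiplicity 2 n + 1 = multiplicity 2 (2 * n)"
    using assms(3) by (simp add: prime_elem_multiplicity_mult_distrib)
  also have "\<dots> = multiplicity 2 m + multiplicity 2 t"
    using t \<open>m \<noteq> 0\<close> \<open>t \<noteq> 0\<close> by (simp add: prime_elem_multiplicity_mult_distrib)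
  finally show ?thesis
    using \<open>odd t\<close> by (simp add: not_dvd_imp_multiplicity_0)
qed

lemma ord_dvd_double_not_dvd:
  fixes p r n :: nat
  assumes "prime r" "odd r" "r dvd p ^ n + 1"
  shows "ord r p dvd 2 * n" "\<not> ord r p dvd n"
proof -
  have minus_one: "[p ^ n + 1 = 0] (mod r)"
    using assms(3) by (simp add: cong_0_iff)
  have "[p ^ n * (p ^ n + 1) = p ^ n * 0] (mod r)"
    by (intro cong_mult cong_refl minus_one)
  also have "[p ^ n * 0 = p ^ n + 1] (mod r)"
    using minus_one by (simp add: cong_sym_eq)
  finally have "[p ^ n * p ^ n + p ^ n = 1 + p ^ n] (mod r)"
    by (simp add: algebra_simps)
  then have "[p ^ n * p ^ n = 1] (mod r)"
    by (rule cong_add_rcancel_nat[THEN iffD1])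
  then have "[p ^ (2 * n) = 1] (mod r)"
    by (simp add: mult_2 power_add)
  then show "ord r p dvd 2 * n"
    by (rule ord_divides[THEN iffD1])
  show "\<not> ord r p dvd n"
  proof
    assume "ord r p dvd n"
    then have "[p ^ n + 1 = 1 + 1] (mod r)"
      by (intro cong_add cong_refl) (simp add: ord_divides')
    then have "[1 + 1 = 0] (mod r)"
      using cong_sym cong_trans minus_one by blast
    then have "r dvd 2" by (simp only: one_add_one cong_0_iff)
    with assms(1,2) show False
      using dvd_imp_le[of r 2] prime_ge_2_nat[of r] by auto
  qed
qed

lemma multiplicity_two_ord:
  fixes p r n :: nat
  assumes "prime r" "odd r" "r dvd p ^ n + 1" "n > 0"
  shows "multiplicity 2 (ord r p) = multiplicity 2 n + 1"
  using multiplicity_two_of_dvd_double ord_dvd_double_not_dvd assms by blast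

theorem lemma1:
  fixes p d n :: nat
  assumes "prime p" and "d > 0" and "n > 0" and "d dvd p ^ n + 1"
  shows "\<exists>k::nat. k > 0 \<and>
           (\<forall>r. prime r \<and> odd r \<and> r dvd d \<longrightarrow> multiplicity 2 (ord r p) = k) \<and>
           (p > 2 \<and> k = 1 \<longrightarrow> multiplicity 2 d \<le> multiplicity 2 (p + 1)) \<and>
           (p > 2 \<and> k > 1 \<longrightarrow> multiplicity 2 d \<le> 1)"
proof (intro exI[of _ "multiplicity 2 n + 1"] conjI allI impI)
  fix r assume "prime r \<and> odd r \<and> r dvd d"
  then show "multiplicity 2 (ord r p) = multiplicity 2 n + 1"
    using multiplicity_two_ord assms(3,4) dvd_trans by blast
next
  have d_le: "multiplicity 2 d \<le> multiplicity 2 (p ^ n + 1)"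
    using assms(4) by (intro dvd_imp_multiplicity_le) auto
  have odd_p: "odd p" if "p > 2"
    using that assms(1) prime_odd_nat by auto
  have odd_n_iff: "odd n \<longleftrightarrow> multiplicity 2 n = 0"
    using assms(3) by (auto simp: not_dvd_imp_multiplicity_0 multiplicity_eq_zero_iff)
  show "multiplicity 2 d \<le> multiplicity 2 (p + 1)" if "p > 2 \<and> multiplicity 2 n + 1 = 1"
    using that d_le odd_p odd_n_iff multiplicity_two_power_plus_one_odd by simp
  show "multiplicity 2 d \<le> 1" if "p > 2 \<and> 1 < multiplicity 2 n + 1"
    using that d_le odd_p odd_n_iff multiplicity_two_power_plus_one_even[of p n] by simp
qed simp

end
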